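(* In the homogeneous setting of the context, let $\gamma>0$ and assume $D_1E^\top=0$, $D_2^\top C_2=0$, $D_1D_1^\top=I_r$, $D_2^\top D_2=I_m$. Let $F\in\mathbb{R}^{m\times n}$ and suppose there exist $P_i>0$ ($i=1,\dots,M$) and $Q>0$ such that for all $i$ $$(A+\lambda_iBF)^\top P_i+P_i(A+\lambda_iBF)+(\lambda_i^2C_2+\lambda_i^2D_2F)^\top(\lambda_i^2C_2+\lambda_i^2D_2F)<0,$$ $$AQ+QA^\top-QC_1^\top C_1Q+\tfrac{1}{\lambda_1^2}EE^\top<0,$$ and $$\sum_{i=1}^M\Big[\operatorname{tr}(C_1QP_iQC_1^\top)+\lambda_i^4\operatorname{tr}(C_2QC_2^\top)\Big]<\gamma.$$ Then with $F$ and $G=-QC_1^\top$, all matrices $\tilde A_i$, $i=1,\dots,M$, are Hurwitz (the auxiliary closed-loop systems are internally stable) and $\sum_{i=1}^M J_i(F,G)<\gamma$.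
   Context: Homogeneous setting: $A\in\mathbb{R}^{n\times n}$, $B\in\mathbb{R}^{n\times m}$, $E\in\mathbb{R}^{n\times q}$, $C_1\in\mathbb{R}^{r\times n}$, $D_1\in\mathbb{R}^{r\times q}$, $C_2\in\mathbb{R}^{p\times n}$, $D_2\in\mathbb{R}^{p\times m}$, $(A,B)$ stabilizable, $(C_1,A)$ detectable. $0<\lambda_1\le\dots\le\lambda_M$ are the eigenvalues of a symmetric positive definite matrix $L_1$ (the follower block of the graph Laplacian). Auxiliary closed-loop systems ($i=1,\dots,M$), with $F\in\mathbb{R}^{m\times n}$, $G\in\mathbb{R}^{n\times r}$: state matrix $\tilde A_i=\begin{bmatrix}A&\lambda_iBF\\ -GC_1&A+GC_1+\lambda_iBF\end{bmatrix}$, input matrix $\tilde E_i=\begin{bmatrix}\frac{1}{\lambda_1}E\\-GD_1\end{bmatrix}$, output matrix $\tilde C_i=\begin{bmatrix}\lambda_i^2C_2&\lambda_i^2D_2F\end{bmatrix}$; $J_i(F,G)=\int_0^\infty\operatorname{tr}[\tilde T_i(t)^\top\tilde T_i(t)]dt$ with $\tilde T_i(t)=\tilde C_ie^{\tilde A_it}\tilde E_i$. (These arise from the auxiliary systems $\dot{\tilde\xi}_i=A\tilde\xi_i+\lambda_iB\tilde u_i+\frac1{\lambda_1}E\tilde d_i$, $\tilde\zeta_i=C_1\tilde\xi_i+D_1\tilde d_i$, $\tilde\epsilon_i=\lambda_i^2C_2\tilde\xi_i+\lambda_i^2D_2\tilde u_i$ with controller $\dot{\tilde w}_i=A\tilde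 w_i+\lambda_iB\tilde u_i+G(C_1\tilde w_i-\tilde\zeta_i)$, $\tilde u_i=F\tilde w_i$.) Hurwitz means all eigenvalues have negative real part. *)

theory Defs
  imports "HOL-Analysis.Analysis"
begin

text \<open>Matrices are Cartesian matrices: an a x b real matrix is real^'b^'a (rows indexed by 'a).\<close>

definition cmat :: "real^'c^'r \<Rightarrow> complex^'c^'r" where
  "cmat X = (\<chi> i j. complex_of_real (X $ i $ j))"

definition hurwitz :: "real^'n^'n \<Rightarrow> bool" where
  "hurwitz X \<longleftrightarrow> (\<forall>(z::complex) (v::complex^'n). v \<noteq> 0 \<and> cmat X *v v = z *s v \<longrightarrow> Re z < 0)"

definition stabilizable :: "real^'n^'n \<Rightarrow> real^'m^'n \<Rightarrow> bool" where
  "stabilizable A B \<longleftrightarrow> (\<exists>K::real^'n^'m. hurwitz (A + B ** K))"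

definition detectable :: "real^'n^'r \<Rightarrow> real^'n^'n \<Rightarrow> bool" where
  "detectable C A \<longleftrightarrow> (\<exists>L::real^'r^'n. hurwitz (A + L ** C))"

definition posdef :: "real^'n^'n \<Rightarrow> bool" where
  "posdef X \<longleftrightarrow> transpose X = X \<and> (\<forall>x. x \<noteq> 0 \<longrightarrow> x \<bullet> (X *v x) > 0)"

definition negdef :: "real^'n^'n \<Rightarrow> bool" where
  "negdef X \<longleftrightarrow> posdef (- X)"

fun mpow :: "real^'n^'n \<Rightarrow> nat \<Rightarrow> real^'n^'n" where
  "mpow X 0 = mat 1"
| "mpow X (Suc k) = X ** mpow X k"

definition mexp :: "real^'n^'n \<Rightarrow> real^'n^'n" where
  "mexp X = (\<Sum>k. (1 / fact k) *\<^sub>R mpow X k)"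

definition blk :: "real^'b^'a \<Rightarrow> real^'d^'a \<Rightarrow> real^'b^'c \<Rightarrow> real^'d^'c \<Rightarrow> real^('b+'d)^('a+'c)" where
  "blk X11 X12 X21 X22 = (\<chi> i j. case i of
      Inl a \<Rightarrow> (case j of Inl b \<Rightarrow> X11 $ a $ b | Inr d \<Rightarrow> X12 $ a $ d)
    | Inr c \<Rightarrow> (case j of Inl b \<Rightarrow> X21 $ c $ b | Inr d \<Rightarrow> X22 $ c $ d))"

definition vblk :: "real^'b^'a \<Rightarrow> real^'b^'c \<Rightarrow> real^'b^('a+'c)" where
  "vblk X1 X2 = (\<chi> i. case i of Inl a \<Rightarrow> X1 $ a | Inr c \<Rightarrow> X2 $ c)"

definition hblk :: "real^'b^'a \<Rightarrow> real^'d^'a \<Rightarrow> real^('b+'d)^'a" where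
  "hblk X1 X2 = (\<chi> i j. case j of Inl b \<Rightarrow> X1 $ i $ b | Inr d \<Rightarrow> X2 $ i $ d)"

text \<open>Closed-loop matrices of the i-th auxiliary system (lam = lambda_i, lam1 = lambda_1).\<close>
definition Atil :: "real^'n^'n \<Rightarrow> real^'m^'n \<Rightarrow> real^'n^'r \<Rightarrow> real^'n^'m \<Rightarrow> real^'r^'n \<Rightarrow> real
    \<Rightarrow> real^('n+'n)^('n+'n)" where
  "Atil A B C1 F G lam = blk A (lam *\<^sub>R (B ** F)) (- (G ** C1)) (A + G ** C1 + lam *\<^sub>R (B ** F))"

definition Etil :: "real^'q^'n \<Rightarrow> real^'q^'r \<Rightarrow> real^'r^'n \<Rightarrow> real \<Rightarrow> real^'q^('n+'n)" where
  "Etil E D1 G lam1 = vblk ((1 / lam1) *\<^sub>R E) (- (G ** D1))"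

definition Ctil :: "real^'n^'p \<Rightarrow> real^'m^'p \<Rightarrow> real^'n^'m \<Rightarrow> real \<Rightarrow> real^('n+'n)^'p" where
  "Ctil C2 D2 F lam = hblk ((lam^2) *\<^sub>R C2) ((lam^2) *\<^sub>R (D2 ** F))"

text \<open>J_i(F,G) = integral over [0,oo) of tr(T_i(t)^T T_i(t)), T_i(t) = C_i e^(A_i t) E_i,
  as a nonnegative (possibly infinite) Lebesgue integral.\<close>
definition Jcost :: "real^'n^'n \<Rightarrow> real^'m^'n \<Rightarrow> real^'q^'n \<Rightarrow> real^'n^'r \<Rightarrow> real^'q^'r
    \<Rightarrow> real^'n^'p \<Rightarrow> real^'m^'p \<Rightarrow> real^'n^'m \<Rightarrow> real^'r^'n \<Rightarrow> real \<Rightarrow> real \<Rightarrow> ennreal" where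
  "Jcost A B E C1 D1 C2 D2 F G lam1 lam =
     (\<integral>\<^sup>+ t\<in>{0..}. ennreal (trace (transpose
        (Ctil C2 D2 F lam ** mexp (t *\<^sub>R Atil A B C1 F G lam) ** Etil E D1 G lam1)
      ** (Ctil C2 D2 F lam ** mexp (t *\<^sub>R Atil A B C1 F G lam) ** Etil E D1 G lam1))) \<partial>lborel)"

end

theory Submission
  imports Defs
begin

text \<open>In the coordinates (x, w - x) the closed-loop matrix Atil is block upper triangular with
  diagonal blocks A + lam B F and A + G C1; both are Hurwitz by the two matrix inequalities, the second
  one after congruence with the inverse of Q.

  For the cost, put AF = A + lam B F, J = [I; I] and S = diag(Q, 0). The function
  V t = tr(Ctil e^(t Atil) S e^(t Atil)^T Ctil^T) + tr(G^T e^(t AF)^T P e^(t AF) G) is nonnegative,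
  and the identity Atil S + S Atil^T = J G G^T J^T + diag(R, 0) - Etil Etil^T, with R the Riccati
  expression of the second inequality, gives V' \<le> -tr(T^T T) for T = Ctil e^(t Atil) Etil: the term
  coming from J G equals, by Atil J = J AF and Ctil J = lam^2 (C2 + D2 F), the one that the first
  inequality absorbs. Hence J_i \<le> V 0 = tr(C1 Q P_i Q C1^T) + lam_i^4 tr(C2 Q C2^T), and summing
  over i gives the bound.\<close>

lemma matrix_add_rdistrib: "((A::real^'n^'m) + B) ** C = A ** C + B ** C"
  by (simp add: matrix_matrix_mult_def vec_eq_iff sum.distrib algebra_simps)

lemma matrix_diff_ldistrib: "(A::real^'n^'m) ** (B - C) = A ** B - A ** C"
  by (simp add: matrix_matrix_mult_def vec_eq_iff sum_subtractf algebra_simps)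

lemma matrix_diff_rdistrib: "((A::real^'n^'m) - B) ** C = A ** C - B ** C"
  by (simp add: matrix_matrix_mult_def vec_eq_iff sum_subtractf algebra_simps)

lemma matrix_mul_uminus_left: "(- (A::real^'n^'m)) ** C = - (A ** C)"
  by (simp add: matrix_matrix_mult_def vec_eq_iff sum_negf)

lemma matrix_mul_uminus_right: "(A::real^'n^'m) ** (- C) = - (A ** C)"
  by (simp add: matrix_matrix_mult_def vec_eq_iff sum_negf)

lemma matrix_mul_scaleR_left: "(c *\<^sub>R (A::real^'n^'m)) ** C = c *\<^sub>R (A ** C)"
  by (simp add: scalar_matrix_assoc)

lemma matrix_mul_scaleR_right: "(A::real^'n^'m) ** (c *\<^sub>R C) = c *\<^sub>R (A ** C)"
  by (simp add: matrix_scalar_ac scalar_matrix_assoc)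

lemma transpose_add: "transpose ((A::real^'n^'m) + B) = transpose A + transpose B"
  by (simp add: transpose_def vec_eq_iff)

lemma transpose_diff: "transpose ((A::real^'n^'m) - B) = transpose A - transpose B"
  by (simp add: transpose_def vec_eq_iff)

lemma transpose_uminus: "transpose (- (A::real^'n^'m)) = - transpose A"
  by (simp add: transpose_def vec_eq_iff)

lemma transpose_zero [simp]: "transpose (0::real^'n^'m) = 0"
  by (simp add: transpose_def vec_eq_iff)

lemma trace_scaleR: "trace (c *\<^sub>R (A::real^'n^'n)) = c * trace A"
  by (simp add: trace_def sum_distrib_left)

lemma bounded_bilinear_matrix_mul: "bounded_bilinear ((**) :: real^'n^'m \<Rightarrow> real^'p^'n \<Rightarrow> real^'p^'m)"
  unfolding bilinear_conv_bounded_bilinear[symmetric] bilinear_def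
  by (auto intro!: linearI simp: matrix_add_ldistrib matrix_add_rdistrib
      matrix_mul_scaleR_left matrix_mul_scaleR_right)

lemma bounded_linear_trace: "bounded_linear (trace :: real^'n^'n \<Rightarrow> real)"
  unfolding linear_conv_bounded_linear[symmetric]
  by (auto intro!: linearI simp: trace_add trace_scaleR)

lemma bounded_linear_transpose: "bounded_linear (transpose :: real^'n^'m \<Rightarrow> real^'m^'n)"
  unfolding linear_conv_bounded_linear[symmetric]
  by (auto intro!: linearI simp: transpose_add transpose_scalar)

lemma matrix_vector_mult_uminus: "(- S) *v x = - (S *v (x::real^'n))"
  by (simp add: matrix_vector_mult_def vec_eq_iff sum_negf)

lemma matrix_vector_mult_scaleR_left: "(c *\<^sub>R S) *v x = c *\<^sub>R (S *v (x::real^'n))"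
  by (simp add: vec_eq_iff matrix_vector_mult_def sum_distrib_left mult_ac)

lemma inner_transpose_matrix_vector:
  fixes A :: "real^'k^'n"
  shows "x \<bullet> (transpose A *v y) = (A *v x) \<bullet> y"
  using dot_lmul_matrix[of y A x] by (simp add: inner_commute)

lemma posdef_quadform_nonneg: "posdef S \<Longrightarrow> x \<bullet> (S *v x) \<ge> 0"
  unfolding posdef_def by (cases "x = 0") (auto intro: less_imp_le)

lemma negdef_quadform_neg: "negdef S \<Longrightarrow> x \<noteq> 0 \<Longrightarrow> x \<bullet> (S *v x) < 0"
  unfolding negdef_def posdef_def by (auto simp: matrix_vector_mult_uminus)

lemma negdef_quadform_nonpos: "negdef S \<Longrightarrow> x \<bullet> (S *v x) \<le> 0"
  by (cases "x = 0") (auto dest: negdef_quadform_neg intro: less_imp_le)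

lemma gram_quadform_nonneg: "x \<bullet> ((transpose (C::real^'n^'m) ** C) *v x) \<ge> 0"
proof -
  have "x \<bullet> ((transpose C ** C) *v x) = (C *v x) \<bullet> (C *v x)"
    unfolding matrix_vector_mul_assoc[symmetric] by (rule inner_transpose_matrix_vector)
  then show ?thesis by simp
qed

lemma negdef_if_quadform_le:
  fixes N X :: "real^'n^'n"
  assumes N: "negdef N" and X: "transpose X = X" and le: "\<And>x. x \<bullet> (X *v x) \<le> x \<bullet> (N *v x)"
  shows "negdef X"
  unfolding negdef_def posdef_def
proof (intro conjI allI impI)
  show "transpose (- X) = - X" using X by (simp add: transpose_uminus)
next
  fix x :: "real^'n" assume "x \<noteq> 0"
  with negdef_quadform_neg[OF N] le[of x] have "x \<bullet> (X *v x) < 0" by (meson le_less_trans)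
  then show "x \<bullet> (- X *v x) > 0" by (simp add: matrix_vector_mult_uminus)
qed

lemma negdef_congruence:
  fixes R :: "real^'n^'m"
  assumes N: "negdef N" and R: "\<And>x. R *v x = 0 \<Longrightarrow> x = 0"
  shows "negdef (transpose R ** N ** R)"
  unfolding negdef_def posdef_def
proof (intro conjI allI impI)
  have "transpose N = N" using N by (simp add: negdef_def posdef_def transpose_uminus)
  then show "transpose (- (transpose R ** N ** R)) = - (transpose R ** N ** R)"
    by (simp add: transpose_uminus matrix_transpose_mul matrix_mul_assoc)
next
  fix x :: "real^'n" assume "x \<noteq> 0"
  then have "(R *v x) \<bullet> (N *v (R *v x)) < 0" using R by (intro negdef_quadform_neg[OF N]) auto
  moreover have "x \<bullet> ((transpose R ** N ** R) *v x) = (R *v x) \<bullet> (N *v (R *v x))"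
    unfolding matrix_vector_mul_assoc[symmetric] by (rule inner_transpose_matrix_vector)
  ultimately show "x \<bullet> (- (transpose R ** N ** R) *v x) > 0"
    by (simp add: matrix_vector_mult_uminus)
qed

lemma trace_congruence:
  "trace ((Y::real^'n^'m) ** S ** transpose Y) = (\<Sum>k\<in>UNIV. (Y$k) \<bullet> (S *v (Y$k)))"
  apply (simp add: trace_def matrix_matrix_mult_def transpose_def inner_vec_def matrix_vector_mult_def
      sum_distrib_left sum_distrib_right mult_ac)
  apply (rule sum.cong[OF refl])
  apply (subst sum.swap)
  apply (simp add: mult_ac)
  done

lemma trace_congruence_nonneg:
  "(\<And>x. x \<bullet> (S *v x) \<ge> 0) \<Longrightarrow> trace ((Y::real^'n^'m) ** S ** transpose Y) \<ge> 0"
  by (simp add: trace_congruence sum_nonneg)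

lemma trace_congruence_nonpos:
  "(\<And>x. x \<bullet> (S *v x) \<le> 0) \<Longrightarrow> trace ((Y::real^'n^'m) ** S ** transpose Y) \<le> 0"
  by (simp add: trace_congruence sum_nonpos)

lemma posdef_inverse:
  fixes Q :: "real^'n^'n"
  assumes Q: "posdef Q"
  obtains R where "posdef R" "Q ** R = mat 1" "R ** Q = mat 1"
proof -
  have Qs: "transpose Q = Q" using Q unfolding posdef_def by simp
  have "Q *v x = 0 \<Longrightarrow> x = 0" for x
    using Q unfolding posdef_def by (metis inner_zero_right less_irrefl)
  then obtain R where RQ: "R ** Q = mat 1" using matrix_left_invertible_ker by blast
  then have QR: "Q ** R = mat 1" using matrix_left_right_inverse by blast
  have Rs: "transpose R = R"
  proof -
    have "transpose R ** Q = mat 1"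
      using arg_cong[OF QR, of transpose] Qs by (simp add: matrix_transpose_mul)
    then have "transpose R = transpose R ** (Q ** R)" using QR by simp
    also have "\<dots> = R" using \<open>transpose R ** Q = mat 1\<close> by (simp add: matrix_mul_assoc)
    finally show ?thesis .
  qed
  have "posdef R"
    unfolding posdef_def
  proof (intro conjI allI impI Rs)
    fix x :: "real^'n" assume "x \<noteq> 0"
    moreover have QRx: "Q *v (R *v x) = x" by (simp add: matrix_vector_mul_assoc QR)
    ultimately have "R *v x \<noteq> 0" by auto
    then have "(R *v x) \<bullet> (Q *v (R *v x)) > 0" using Q unfolding posdef_def by blast
    then show "x \<bullet> (R *v x) > 0" by (simp add: QRx inner_commute)
  qed
  then show ?thesis using QR RQ by (rule that)
qed

section \<open>Lyapunov criteria for stability\<close>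

lemma cmat_add: "cmat (X + Y) = cmat X + cmat Y"
  by (simp add: cmat_def vec_eq_iff)

lemma cmat_mult_vector_nth: "(cmat X *v v) $ i = (\<Sum>j\<in>UNIV. complex_of_real (X$i$j) * v$j)"
  by (simp add: cmat_def matrix_vector_mult_def)

lemma eigenvector_Re_Im:
  fixes M :: "real^'n^'n"
  assumes "cmat M *v v = z *s v"
  shows "M *v (\<chi> i. Re (v$i)) = Re z *\<^sub>R (\<chi> i. Re (v$i)) - Im z *\<^sub>R (\<chi> i. Im (v$i))"
    and "M *v (\<chi> i. Im (v$i)) = Im z *\<^sub>R (\<chi> i. Re (v$i)) + Re z *\<^sub>R (\<chi> i. Im (v$i))"
proof -
  have e: "(\<Sum>j\<in>UNIV. complex_of_real (M$i$j) * v$j) = z * v$i" for i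
    using arg_cong[OF assms, of "\<lambda>w. w $ i"] by (simp add: cmat_mult_vector_nth)
  show "M *v (\<chi> i. Re (v$i)) = Re z *\<^sub>R (\<chi> i. Re (v$i)) - Im z *\<^sub>R (\<chi> i. Im (v$i))"
    using arg_cong[OF e, of Re] by (simp add: vec_eq_iff matrix_vector_mult_def Re_sum)
  show "M *v (\<chi> i. Im (v$i)) = Im z *\<^sub>R (\<chi> i. Re (v$i)) + Re z *\<^sub>R (\<chi> i. Im (v$i))"
    using arg_cong[OF e, of Im] by (simp add: vec_eq_iff matrix_vector_mult_def Im_sum algebra_simps)
qed

lemma Lyapunov_quadform:
  fixes M P :: "real^'n^'n"
  assumes "transpose P = P"
  shows "x \<bullet> ((transpose M ** P + P ** M) *v x) = 2 * ((M *v x) \<bullet> (P *v x))"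
proof -
  have "x \<bullet> ((transpose M ** P) *v x) = (M *v x) \<bullet> (P *v x)"
    unfolding matrix_vector_mul_assoc[symmetric] by (rule inner_transpose_matrix_vector)
  moreover have "x \<bullet> ((P ** M) *v x) = (M *v x) \<bullet> (P *v x)"
    using inner_transpose_matrix_vector[of x P "M *v x"]
    unfolding assms matrix_vector_mul_assoc[symmetric] by (simp only: inner_commute)
  ultimately show ?thesis by (simp add: matrix_vector_mult_add_rdistrib inner_add_right)
qed

text \<open>For an eigenvalue z with eigenvector a + i b, the Lyapunov form evaluated at a and b sums to
  2 Re z times the (positive) energy of a and b.\<close>
lemma hurwitz_if_Lyapunov:
  fixes M P :: "real^'n^'n"
  assumes P: "posdef P" and N: "negdef (transpose M ** P + P ** M)"
  shows "hurwitz M"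
  unfolding hurwitz_def
proof (intro allI impI, elim conjE)
  fix z :: complex and v :: "complex^'n"
  assume v0: "v \<noteq> 0" and ev: "cmat M *v v = z *s v"
  define a where "a = (\<chi> i. Re (v$i))"
  define b where "b = (\<chi> i. Im (v$i))"
  have Ma: "M *v a = Re z *\<^sub>R a - Im z *\<^sub>R b" and Mb: "M *v b = Im z *\<^sub>R a + Re z *\<^sub>R b"
    using eigenvector_Re_Im[OF ev] unfolding a_def b_def by auto
  have Ps: "transpose P = P" using P unfolding posdef_def by simp
  have Psym: "a \<bullet> (P *v b) = b \<bullet> (P *v a)"
    using inner_transpose_matrix_vector[of a P b] Ps by (simp add: inner_commute)
  let ?L = "transpose M ** P + P ** M"
  have energy: "a \<bullet> (?L *v a) + b \<bullet> (?L *v b) = 2 * Re z * (a \<bullet> (P *v a) + b \<bullet> (P *v b))"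
    unfolding Lyapunov_quadform[OF Ps] Ma Mb using Psym
    by (simp add: inner_diff_left inner_add_left algebra_simps inner_commute)
  have "a \<noteq> 0 \<or> b \<noteq> 0"
    using v0 by (auto simp: a_def b_def vec_eq_iff complex_eq_iff)
  then have "a \<bullet> (?L *v a) + b \<bullet> (?L *v b) < 0" and "a \<bullet> (P *v a) + b \<bullet> (P *v b) > 0"
    using negdef_quadform_neg[OF N] negdef_quadform_nonpos[OF N, of a] negdef_quadform_nonpos[OF N, of b]
      posdef_quadform_nonneg[OF P, of a] posdef_quadform_nonneg[OF P, of b] P
    unfolding posdef_def by (metis add_neg_nonpos add_nonpos_neg, metis add_pos_nonneg add_nonneg_pos)
  with energy show "Re z < 0"
    by (simp add: mult_less_0_iff)
qed

lemma hurwitz_if_dual_Lyapunov: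
  fixes M Q :: "real^'n^'n"
  assumes Q: "posdef Q" and N: "negdef (M ** Q + Q ** transpose M)"
  shows "hurwitz M"
proof -
  obtain R where R: "posdef R" and QR: "Q ** R = mat 1" and RQ: "R ** Q = mat 1"
    using posdef_inverse[OF Q] .
  have Rs: "transpose R = R" using R unfolding posdef_def by simp
  have "x = Q *v (R *v x)" for x by (simp add: matrix_vector_mul_assoc QR)
  then have "R *v x = 0 \<Longrightarrow> x = 0" for x by (metis matrix_vector_mult_0_right)
  then have "negdef (transpose R ** (M ** Q + Q ** transpose M) ** R)"
    by (rule negdef_congruence[OF N])
  also have "transpose R ** (M ** Q + Q ** transpose M) ** R = transpose M ** R + R ** M"
    by (simp add: Rs matrix_add_ldistrib matrix_add_rdistrib matrix_mul_assoc RQ)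
      (simp flip: matrix_mul_assoc add: QR add.commute)
  finally show ?thesis by (rule hurwitz_if_Lyapunov[OF R])
qed

lemma hurwitz_if_Lyapunov_inequality:
  fixes M P :: "real^'n^'n" and C :: "real^'n^'p"
  assumes P: "posdef P" and N: "negdef (transpose M ** P + P ** M + transpose C ** C)"
  shows "hurwitz M"
proof (rule hurwitz_if_Lyapunov[OF P negdef_if_quadform_le[OF N]])
  have "transpose P = P" using P unfolding posdef_def by simp
  then show "transpose (transpose M ** P + P ** M) = transpose M ** P + P ** M"
    by (simp add: transpose_add matrix_transpose_mul add.commute)
  show "x \<bullet> ((transpose M ** P + P ** M) *v x)
      \<le> x \<bullet> ((transpose M ** P + P ** M + transpose C ** C) *v x)" for x
    using gram_quadform_nonneg[of x C] by (simp add: matrix_vector_mult_add_rdistrib inner_add_right)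
qed

lemma hurwitz_if_Riccati_inequality:
  fixes A Q :: "real^'n^'n" and C :: "real^'n^'r" and E :: "real^'q^'n"
  assumes Q: "posdef Q" and "c \<ge> 0"
    and N: "negdef (A ** Q + Q ** transpose A - Q ** transpose C ** C ** Q + c *\<^sub>R (E ** transpose E))"
  shows "hurwitz (A + (- (Q ** transpose C)) ** C)"
proof (rule hurwitz_if_dual_Lyapunov[OF Q negdef_if_quadform_le[OF N]])
  have Qs: "transpose Q = Q" using Q unfolding posdef_def by simp
  let ?M = "A + (- (Q ** transpose C)) ** C"
  have eq: "?M ** Q + Q ** transpose ?M
     = (A ** Q + Q ** transpose A - Q ** transpose C ** C ** Q + c *\<^sub>R (E ** transpose E))
       - (transpose (C ** Q) ** (C ** Q) + c *\<^sub>R (transpose (transpose E) ** transpose E))"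
    by (simp add: matrix_add_rdistrib matrix_add_ldistrib matrix_mul_uminus_left matrix_mul_uminus_right
        matrix_diff_rdistrib matrix_diff_ldistrib transpose_add transpose_diff transpose_uminus
        matrix_transpose_mul Qs matrix_mul_assoc algebra_simps)
  have E_psd: "x \<bullet> ((c *\<^sub>R (transpose (transpose E) ** transpose E)) *v x) \<ge> 0" for x
    using gram_quadform_nonneg[of x "transpose E"] \<open>c \<ge> 0\<close>
    by (simp add: matrix_vector_mult_scaleR_left)
  show "x \<bullet> ((?M ** Q + Q ** transpose ?M) *v x)
      \<le> x \<bullet> ((A ** Q + Q ** transpose A - Q ** transpose C ** C ** Q + c *\<^sub>R (E ** transpose E))
        *v x)" for x
    using gram_quadform_nonneg[of x "C ** Q"] E_psd[of x] unfolding eq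
    by (simp add: matrix_vector_mult_diff_rdistrib matrix_vector_mult_add_rdistrib
        inner_diff_right inner_add_right)
  show "transpose (?M ** Q + Q ** transpose ?M) = ?M ** Q + Q ** transpose ?M"
    by (simp only: transpose_add matrix_transpose_mul Qs transpose_transpose add.commute)
qed

section \<open>Block matrices\<close>

lemma sum_UNIV_Plus:
  "(\<Sum>x\<in>(UNIV::('a::finite + 'b::finite) set). f x) = (\<Sum>a\<in>UNIV. f (Inl a)) + (\<Sum>b\<in>UNIV. f (Inr b))"
  by (subst UNIV_Plus_UNIV[symmetric], subst sum.Plus) (auto simp: comp_def)

lemma vec_sum_rows_eqI:
  fixes X Y :: "real^'c^('a::finite+'b::finite)"
  assumes "\<And>a j. X $ Inl a $ j = Y $ Inl a $ j" "\<And>b j. X $ Inr b $ j = Y $ Inr b $ j"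
  shows "X = Y"
proof -
  have "X $ i = Y $ i" for i
    by (cases i) (simp_all add: vec_eq_iff assms)
  then show ?thesis by (simp add: vec_eq_iff)
qed

lemma vec_sum_columns_eqI:
  fixes X Y :: "real^('c::finite+'d::finite)^'a"
  assumes "\<And>a j. X $ a $ Inl j = Y $ a $ Inl j" "\<And>a j. X $ a $ Inr j = Y $ a $ Inr j"
  shows "X = Y"
proof -
  have "X $ a $ j = Y $ a $ j" for a j
    by (cases j) (simp_all add: assms)
  then show ?thesis by (simp add: vec_eq_iff)
qed

lemma vec_sum_blocks_eqI:
  fixes X Y :: "real^('c::finite+'d::finite)^('a::finite+'b::finite)"
  assumes "\<And>a j. X $ Inl a $ Inl j = Y $ Inl a $ Inl j" "\<And>a j. X $ Inl a $ Inr j = Y $ Inl a $ Inr j"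
    "\<And>a j. X $ Inr a $ Inl j = Y $ Inr a $ Inl j" "\<And>a j. X $ Inr a $ Inr j = Y $ Inr a $ Inr j"
  shows "X = Y"
proof -
  have "X $ a $ j = Y $ a $ j" for a j
    by (cases a; cases j) (simp_all add: assms)
  then show ?thesis by (simp add: vec_eq_iff)
qed

lemma blk_nth [simp]:
  "blk X11 X12 X21 X22 $ Inl a $ Inl b = X11 $ a $ b"
  "blk X11 X12 X21 X22 $ Inl a $ Inr d = X12 $ a $ d"
  "blk X11 X12 X21 X22 $ Inr c $ Inl b = X21 $ c $ b"
  "blk X11 X12 X21 X22 $ Inr c $ Inr d = X22 $ c $ d"
  by (simp_all add: blk_def)

lemma vblk_nth [simp]: "vblk X1 X2 $ Inl a = X1 $ a" "vblk X1 X2 $ Inr c = X2 $ c"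
  by (simp_all add: vblk_def)

lemma hblk_nth [simp]: "hblk X1 X2 $ i $ Inl b = X1 $ i $ b" "hblk X1 X2 $ i $ Inr d = X2 $ i $ d"
  by (simp_all add: hblk_def)

lemma blk_mult_blk:
  "blk a b c d ** blk e f g h
    = blk (a ** e + b ** g) (a ** f + b ** h) (c ** e + d ** g) (c ** f + d ** h)"
  by (rule vec_sum_blocks_eqI) (simp_all add: matrix_matrix_mult_def sum_UNIV_Plus)

lemma blk_mult_vblk: "blk a b c d ** vblk x y = vblk (a ** x + b ** y) (c ** x + d ** y)"
  by (rule vec_sum_rows_eqI) (simp_all add: matrix_matrix_mult_def sum_UNIV_Plus)

lemma hblk_mult_blk: "hblk a b ** blk p q r s = hblk (a ** p + b ** r) (a ** q + b ** s)"
  by (rule vec_sum_columns_eqI) (simp_all add: matrix_matrix_mult_def sum_UNIV_Plus)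

lemma hblk_mult_vblk: "hblk a b ** vblk x y = a ** x + b ** y"
  by (simp add: matrix_matrix_mult_def sum_UNIV_Plus vec_eq_iff)

lemma vblk_mult_hblk: "vblk x y ** hblk u v = blk (x ** u) (x ** v) (y ** u) (y ** v)"
  by (rule vec_sum_blocks_eqI) (simp_all add: matrix_matrix_mult_def)

lemma vblk_mult: "vblk x y ** M = vblk (x ** M) (y ** M)"
  by (rule vec_sum_rows_eqI) (simp_all add: matrix_matrix_mult_def)

lemma transpose_blk:
  "transpose (blk a b c d) = blk (transpose a) (transpose c) (transpose b) (transpose d)"
  by (rule vec_sum_blocks_eqI) (simp_all add: transpose_def)

lemma transpose_vblk: "transpose (vblk x y) = hblk (transpose x) (transpose y)"
  by (rule vec_sum_columns_eqI) (simp_all add: transpose_def)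

lemma transpose_hblk: "transpose (hblk x y) = vblk (transpose x) (transpose y)"
  by (rule vec_sum_rows_eqI) (simp_all add: transpose_def)

lemma blk_corner_eq_congruence: "blk R 0 0 0 = vblk (mat 1) 0 ** R ** transpose (vblk (mat 1) 0)"
  unfolding transpose_vblk vblk_mult[of "mat 1" 0 R] by (simp add: vblk_mult_hblk)

lemma blk_add: "blk a b c d + blk a' b' c' d' = blk (a + a') (b + b') (c + c') (d + d')"
  by (rule vec_sum_blocks_eqI) simp_all

lemma blk_diff: "blk a b c d - blk a' b' c' d' = blk (a - a') (b - b') (c - c') (d - d')"
  by (rule vec_sum_blocks_eqI) simp_all

section \<open>The matrix exponential\<close>

lemma mpow_Suc_right: "mpow X (Suc k) = mpow X k ** X"
  by (induction k) (simp_all add: matrix_mul_assoc)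

lemma mpow_scaleR: "mpow (t *\<^sub>R X) k = (t ^ k) *\<^sub>R mpow X k"
  by (induction k) (simp_all add: scalar_matrix_assoc[symmetric] matrix_scalar_ac)

lemma mpow_intertwine:
  assumes "X ** J = J ** Y"
  shows "mpow X k ** J = J ** mpow Y k"
proof (induction k)
  case (Suc k)
  have "mpow X (Suc k) ** J = X ** (mpow X k ** J)" by (simp add: matrix_mul_assoc)
  also have "\<dots> = (X ** J) ** mpow Y k" by (simp add: Suc matrix_mul_assoc)
  finally show ?case by (simp add: assms matrix_mul_assoc)
qed simp

lemma abs_matrix_mul_entry_le:
  fixes X Y :: "real^'n^'n"
  assumes "\<And>i j. \<bar>X$i$j\<bar> \<le> a" "\<And>i j. \<bar>Y$i$j\<bar> \<le> b"
  shows "\<bar>(X ** Y)$i$j\<bar> \<le> real CARD('n) * a * b"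
proof -
  have "\<bar>(X ** Y)$i$j\<bar> \<le> (\<Sum>k\<in>(UNIV::'n set). \<bar>X$i$k\<bar> * \<bar>Y$k$j\<bar>)"
    unfolding matrix_matrix_mult_def by (simp add: sum_abs[THEN order_trans] abs_mult)
  also have "\<dots> \<le> (\<Sum>k\<in>(UNIV::'n set). a * b)"
    using assms by (intro sum_mono mult_mono) (auto intro: order_trans[OF abs_ge_zero])
  finally show ?thesis by simp
qed

lemma mpow_entry_bound:
  fixes X :: "real^'n^'n"
  obtains c where "\<And>k i j. \<bar>mpow X k $ i $ j\<bar> \<le> c ^ k"
proof
  define m where "m = (\<Sum>i\<in>UNIV. \<Sum>j\<in>UNIV. \<bar>X$i$j\<bar>)"
  have mX: "\<bar>X$i$j\<bar> \<le> m" for i j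
    unfolding m_def
    by (rule order_trans[OF member_le_sum member_le_sum[where f = "\<lambda>i. \<Sum>j\<in>UNIV. \<bar>X$i$j\<bar>"]])
      (auto intro: sum_nonneg)
  then have m0: "m \<ge> 0" by (meson abs_ge_zero order_trans)
  fix k i j
  show "\<bar>mpow X k $ i $ j\<bar> \<le> (real CARD('n) * m + 1) ^ k"
  proof (induction k arbitrary: i j)
    case (Suc k)
    have "\<bar>mpow X (Suc k) $ i $ j\<bar> \<le> real CARD('n) * m * (real CARD('n) * m + 1) ^ k"
      by (simp only: mpow.simps) (rule abs_matrix_mul_entry_le[OF mX Suc.IH])
    also have "\<dots> \<le> (real CARD('n) * m + 1) ^ Suc k"
      using m0 by (simp add: mult_right_mono)
    finally show ?case .
  qed (simp add: mat_def)
qed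

definition mexp_coeff :: "real^'n^'n \<Rightarrow> 'n \<Rightarrow> 'n \<Rightarrow> nat \<Rightarrow> real" where
  "mexp_coeff X i j k = mpow X k $ i $ j / fact k"

lemma summable_mexp_coeff: "summable (\<lambda>k. mexp_coeff X i j k * y ^ k)"
proof -
  obtain c where c: "\<And>k i j. \<bar>mpow X k $ i $ j\<bar> \<le> c ^ k"
    using mpow_entry_bound by blast
  show ?thesis
  proof (rule summable_comparison_test'[OF summable_exp[of "\<bar>c\<bar> * \<bar>y\<bar>"]])
    fix k :: nat
    have "norm (mexp_coeff X i j k * y ^ k) = \<bar>mpow X k $ i $ j\<bar> * \<bar>y\<bar>^k / fact k"
      by (simp add: mexp_coeff_def abs_mult power_abs)
    also have "\<dots> \<le> \<bar>c\<bar>^k * \<bar>y\<bar>^k / fact k"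
      using c[of k i j] by (intro divide_right_mono mult_right_mono)
        (auto intro: order_trans abs_ge_self simp flip: power_abs)
    finally show "norm (mexp_coeff X i j k * y ^ k) \<le> inverse (fact k) * (\<bar>c\<bar> * \<bar>y\<bar>) ^ k"
      by (simp add: power_mult_distrib field_simps)
  qed
qed

lemma mexp_scaleR_entry: "mexp (t *\<^sub>R X) $ i $ j = (\<Sum>k. mexp_coeff X i j k * t ^ k)"
proof -
  have "(\<lambda>k. (1 / fact k) *\<^sub>R mpow (t *\<^sub>R X) k) sums (\<chi> i j. \<Sum>k. mexp_coeff X i j k * t ^ k)"
    unfolding sums_def
  proof (intro vec_tendstoI)
    fix i j
    have "(\<lambda>n. (\<Sum>k<n. (1 / fact k) *\<^sub>R mpow (t *\<^sub>R X) k) $ i $ j)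
        = (\<lambda>n. \<Sum>k<n. mexp_coeff X i j k * t ^ k)"
      by (simp add: mexp_coeff_def mpow_scaleR ac_simps)
    then show "((\<lambda>n. (\<Sum>k<n. (1 / fact k) *\<^sub>R mpow (t *\<^sub>R X) k) $ i $ j)
        \<longlongrightarrow> (\<chi> i j. \<Sum>k. mexp_coeff X i j k * t ^ k) $ i $ j) sequentially"
      using summable_LIMSEQ[OF summable_mexp_coeff] by simp
  qed
  then show ?thesis unfolding mexp_def by (simp add: sums_unique[symmetric])
qed

lemma mexp_zero: "mexp (0::real^'n^'n) = mat 1"
proof -
  have "mexp (0::real^'n^'n) $ i $ j = mat 1 $ i $ j" for i j
  proof -
    have "(\<Sum>k. mexp_coeff (0::real^'n^'n) i j k * 0 ^ k) = (\<Sum>k\<in>{0}. mexp_coeff 0 i j k * 0 ^ k)"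
      by (rule suminf_finite) auto
    then show ?thesis using mexp_scaleR_entry[of 0 "0::real^'n^'n" i j] by (simp add: mexp_coeff_def)
  qed
  then show ?thesis by (simp add: vec_eq_iff)
qed

lemma mexp_mul_entry:
  "(mexp (t *\<^sub>R X) ** J) $ i $ j = (\<Sum>k. (mpow X k ** J) $ i $ j / fact k * t ^ k)"
proof -
  have "(mexp (t *\<^sub>R X) ** J) $ i $ j = (\<Sum>l\<in>UNIV. \<Sum>k. mexp_coeff X i l k * t ^ k * J $ l $ j)"
    by (simp add: matrix_matrix_mult_def mexp_scaleR_entry suminf_mult2 summable_mexp_coeff)
  also have "\<dots> = (\<Sum>k. \<Sum>l\<in>UNIV. mexp_coeff X i l k * t ^ k * J $ l $ j)"
    by (rule suminf_sum[symmetric]) (intro summable_mult2 summable_mexp_coeff)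
  finally show ?thesis
    by (simp add: mexp_coeff_def matrix_matrix_mult_def sum_divide_distrib sum_distrib_left mult_ac)
qed

lemma mul_mexp_entry:
  "(J ** mexp (t *\<^sub>R X)) $ i $ j = (\<Sum>k. (J ** mpow X k) $ i $ j / fact k * t ^ k)"
proof -
  have "(J ** mexp (t *\<^sub>R X)) $ i $ j = (\<Sum>l\<in>UNIV. \<Sum>k. J $ i $ l * (mexp_coeff X l j k * t ^ k))"
    by (simp add: matrix_matrix_mult_def mexp_scaleR_entry suminf_mult summable_mexp_coeff)
  also have "\<dots> = (\<Sum>k. \<Sum>l\<in>UNIV. J $ i $ l * (mexp_coeff X l j k * t ^ k))"
    by (rule suminf_sum[symmetric]) (intro summable_mult summable_mexp_coeff)
  finally show ?thesis
    by (simp add: mexp_coeff_def matrix_matrix_mult_def sum_divide_distrib sum_distrib_left mult_ac)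
qed

lemma mexp_intertwine:
  assumes "X ** J = J ** Y"
  shows "mexp (t *\<^sub>R X) ** J = J ** mexp (t *\<^sub>R Y)"
  by (simp add: vec_eq_iff mexp_mul_entry mul_mexp_entry mpow_intertwine[OF assms])

lemma has_vector_derivative_matrixI:
  fixes f :: "real \<Rightarrow> real^'n^'m"
  assumes "\<And>i j. ((\<lambda>t. f t $ i $ j) has_real_derivative D $ i $ j) (at t within S)"
  shows "(f has_vector_derivative D) (at t within S)"
  unfolding has_vector_derivative_def
proof (subst has_derivative_componentwise_within, intro ballI)
  fix b :: "real^'n^'m" assume "b \<in> Basis"
  then obtain i j where b: "b = axis i (axis j 1)"
    by (auto simp: Basis_vec_def)
  have "(*) (D $ i $ j) = (\<lambda>h. h * D $ i $ j)" by (rule ext) simp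
  then have "((\<lambda>t. f t $ i $ j) has_derivative (\<lambda>h. h * D $ i $ j)) (at t within S)"
    using has_field_derivative_imp_has_derivative[OF assms[of i j]] by simp
  then show "((\<lambda>x. f x \<bullet> b) has_derivative (\<lambda>x. x *\<^sub>R D \<bullet> b)) (at t within S)"
    unfolding b by (simp add: inner_axis)
qed

lemma has_vector_derivative_mexp_right:
  "((\<lambda>t. mexp (t *\<^sub>R X)) has_vector_derivative mexp (t *\<^sub>R X) ** X) (at t within S)"
proof (rule has_vector_derivative_matrixI)
  fix i j
  have "diffs (mexp_coeff X i j) k = (mpow X k ** X) $ i $ j / fact k" for k
    by (simp del: mpow.simps add: diffs_def mexp_coeff_def mpow_Suc_right)
  moreover have "((\<lambda>t. \<Sum>k. mexp_coeff X i j k * t ^ k) has_real_derivative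
      (\<Sum>k. diffs (mexp_coeff X i j) k * t ^ k)) (at t)"
    by (rule termdiffs_strong_converges_everywhere) (rule summable_mexp_coeff)
  ultimately have "((\<lambda>t. mexp (t *\<^sub>R X) $ i $ j) has_real_derivative
      (mexp (t *\<^sub>R X) ** X) $ i $ j) (at t)"
    unfolding mexp_scaleR_entry mexp_mul_entry by simp
  then show "((\<lambda>t. mexp (t *\<^sub>R X) $ i $ j) has_real_derivative
      (mexp (t *\<^sub>R X) ** X) $ i $ j) (at t within S)"
    by (rule has_field_derivative_at_within)
qed

lemma has_vector_derivative_mexp_left:
  "((\<lambda>t. mexp (t *\<^sub>R X)) has_vector_derivative X ** mexp (t *\<^sub>R X)) (at t within S)"
  using has_vector_derivative_mexp_right[of X t S] by (simp add: mexp_intertwine[of X X X t])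

lemma continuous_on_mexp: "continuous_on S (\<lambda>t. mexp (t *\<^sub>R X))"
  by (rule continuous_at_imp_continuous_on)
    (auto intro: has_vector_derivative_continuous[OF has_vector_derivative_mexp_right])

lemma has_real_derivative_trace_congruence:
  fixes X :: "real \<Rightarrow> real^'n^'m" and N S :: "real^'n^'n"
  assumes "(X has_vector_derivative X t ** N) (at t)"
  shows "((\<lambda>t. trace (X t ** S ** transpose (X t))) has_real_derivative
      trace (X t ** (N ** S + S ** transpose N) ** transpose (X t))) (at t)"
proof -
  have "((\<lambda>t. X t ** S) has_vector_derivative X t ** N ** S) (at t)"
    using bounded_bilinear.has_vector_derivative[OF bounded_bilinear_matrix_mul assms
        has_vector_derivative_const[of S]] by simp
  moreover have "((\<lambda>t. transpose (X t)) has_vector_derivative transpose (X t ** N)) (at t)"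
    by (rule bounded_linear.has_vector_derivative[OF bounded_linear_transpose assms])
  ultimately have "((\<lambda>t. X t ** S ** transpose (X t)) has_vector_derivative
      X t ** S ** transpose (X t ** N) + X t ** N ** S ** transpose (X t)) (at t)"
    by (rule bounded_bilinear.has_vector_derivative[OF bounded_bilinear_matrix_mul])
  then have "((\<lambda>t. X t ** S ** transpose (X t)) has_vector_derivative
      X t ** (N ** S + S ** transpose N) ** transpose (X t)) (at t)"
    by (simp add: matrix_transpose_mul matrix_add_ldistrib matrix_add_rdistrib matrix_mul_assoc
        add.commute)
  then show ?thesis
    using bounded_linear.has_vector_derivative[OF bounded_linear_trace]
    by (simp add: has_real_derivative_iff_has_vector_derivative)
qed

text \<open>An eigenvector (v1, v2) of Atil yields the eigenvector v1 of A + lam B F if v1 = v2, and the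
  eigenvector v2 - v1 of A + G C1 otherwise.\<close>
lemma hurwitz_Atil:
  fixes A :: "real^'n^'n" and B :: "real^'m^'n" and C1 :: "real^'n^'r" and F :: "real^'n^'m"
    and G :: "real^'r^'n"
  assumes HF: "hurwitz (A + lam *\<^sub>R (B ** F))" and HG: "hurwitz (A + G ** C1)"
  shows "hurwitz (Atil A B C1 F G lam)"
  unfolding hurwitz_def
proof (intro allI impI, elim conjE)
  fix z :: complex and v :: "complex^('n+'n)"
  assume v0: "v \<noteq> 0" and ev: "cmat (Atil A B C1 F G lam) *v v = z *s v"
  define v1 where "v1 = (\<chi> i. v $ Inl i)"
  define v2 where "v2 = (\<chi> i. v $ Inr i)"
  let ?K = "cmat (lam *\<^sub>R (B ** F))" and ?H = "cmat (G ** C1)"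
  have e: "(cmat (Atil A B C1 F G lam) *v v) $ k = z * v $ k" for k
    using arg_cong[OF ev, of "\<lambda>w. w $ k"] by simp
  have "(cmat A *v v1 + ?K *v v2) $ i = (z *s v1) $ i"
    and "(- (?H *v v1) + cmat (A + G ** C1 + lam *\<^sub>R (B ** F)) *v v2) $ i = (z *s v2) $ i" for i
    using e[of "Inl i"] e[of "Inr i"]
    by (simp_all add: cmat_mult_vector_nth sum_UNIV_Plus Atil_def v1_def v2_def matrix_vector_mult_def
        cmat_def sum_negf)
  then have top: "cmat A *v v1 + ?K *v v2 = z *s v1"
    and bottom: "- (?H *v v1) + cmat (A + G ** C1 + lam *\<^sub>R (B ** F)) *v v2 = z *s v2"
    by (simp_all add: vec_eq_iff)
  show "Re z < 0"
  proof (cases "v1 = v2")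
    case True
    have "v1 \<noteq> 0"
    proof
      assume "v1 = 0"
      with True have "v $ k = 0" for k by (cases k) (auto simp: v1_def v2_def vec_eq_iff)
      with v0 show False by (simp add: vec_eq_iff)
    qed
    moreover have "cmat (A + lam *\<^sub>R (B ** F)) *v v1 = z *s v1"
      using top True by (simp add: cmat_add matrix_vector_mult_add_rdistrib)
    ultimately show ?thesis using HF unfolding hurwitz_def by blast
  next
    case False
    have bottom': "cmat A *v v2 + ?H *v v2 + ?K *v v2 - ?H *v v1 = z *s v2"
      using bottom by (simp add: cmat_add matrix_vector_mult_add_rdistrib algebra_simps)
    have "cmat (A + G ** C1) *v (v2 - v1)
        = (cmat A *v v2 + ?H *v v2 + ?K *v v2 - ?H *v v1) - (cmat A *v v1 + ?K *v v2)"
      by (simp add: cmat_add matrix_vector_mult_add_rdistrib matrix_vector_mult_diff_distrib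
          algebra_simps)
    also have "\<dots> = z *s (v2 - v1)"
      unfolding bottom' top by (simp add: vector_ssub_ldistrib)
    finally have "cmat (A + G ** C1) *v (v2 - v1) = z *s (v2 - v1)" .
    moreover have "v2 - v1 \<noteq> 0" using False by simp
    ultimately show ?thesis using HG unfolding hurwitz_def by blast
  qed
qed

lemma Atil_mult_vblk_id:
  "Atil A B C1 F G lam ** vblk (mat 1) (mat 1) = vblk (mat 1) (mat 1) ** (A + lam *\<^sub>R (B ** F))"
  unfolding Atil_def blk_mult_vblk vblk_mult by simp

lemma Ctil_mult_vblk_id: "Ctil C2 D2 F lam ** vblk (mat 1) (mat 1) = lam^2 *\<^sub>R C2 + lam^2 *\<^sub>R (D2 ** F)"
  unfolding Ctil_def hblk_mult_vblk by simp

lemma Ctil_mexp_Atil_mult_vblk_id: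
  "Ctil C2 D2 F lam ** mexp (t *\<^sub>R Atil A B C1 F G lam) ** vblk (mat 1) (mat 1)
    = (lam^2 *\<^sub>R C2 + lam^2 *\<^sub>R (D2 ** F)) ** mexp (t *\<^sub>R (A + lam *\<^sub>R (B ** F)))"
proof -
  have "mexp (t *\<^sub>R Atil A B C1 F G lam) ** vblk (mat 1) (mat 1)
      = vblk (mat 1) (mat 1) ** mexp (t *\<^sub>R (A + lam *\<^sub>R (B ** F)))"
    by (rule mexp_intertwine) (rule Atil_mult_vblk_id)
  then have "Ctil C2 D2 F lam ** mexp (t *\<^sub>R Atil A B C1 F G lam) ** vblk (mat 1) (mat 1)
      = Ctil C2 D2 F lam ** vblk (mat 1) (mat 1) ** mexp (t *\<^sub>R (A + lam *\<^sub>R (B ** F)))"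
    by (simp flip: matrix_mul_assoc)
  then show ?thesis by (simp add: Ctil_mult_vblk_id)
qed

lemma Ctil_congruence_blk:
  "Ctil C2 D2 F lam ** blk Q 0 0 0 ** transpose (Ctil C2 D2 F lam) = lam^4 *\<^sub>R (C2 ** Q ** transpose C2)"
  unfolding Ctil_def hblk_mult_blk transpose_hblk hblk_mult_vblk
  by (simp add: transpose_scalar matrix_mul_scaleR_left matrix_mul_scaleR_right matrix_mul_assoc)

lemma Atil_Lyapunov_identity:
  fixes A :: "real^'n^'n" and B :: "real^'m^'n" and E :: "real^'q^'n"
    and C1 :: "real^'n^'r" and D1 :: "real^'q^'r" and F :: "real^'n^'m" and Q :: "real^'n^'n"
  defines "G \<equiv> - (Q ** transpose C1)"
  assumes D1E: "D1 ** transpose E = 0" and D1D1: "D1 ** transpose D1 = mat 1"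
    and Qs: "transpose Q = Q"
  shows "Atil A B C1 F G lam ** blk Q 0 0 0 + blk Q 0 0 0 ** transpose (Atil A B C1 F G lam)
     = vblk G G ** transpose (vblk G G)
       + blk (A ** Q + Q ** transpose A - Q ** transpose C1 ** C1 ** Q
           + (1 / lam\<^sub>1^2) *\<^sub>R (E ** transpose E)) 0 0 0
       - Etil E D1 G lam\<^sub>1 ** transpose (Etil E D1 G lam\<^sub>1)"
proof -
  have ED1: "E ** transpose D1 = 0"
    using arg_cong[OF D1E, of transpose] by (simp add: matrix_transpose_mul)
  have D1E': "X ** D1 ** transpose E = 0" for X :: "real^'r^'n"
    by (simp add: D1E flip: matrix_mul_assoc)
  have D1D1': "X ** D1 ** transpose D1 = X" for X :: "real^'r^'n"
    by (simp add: D1D1 flip: matrix_mul_assoc)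
  show ?thesis
    unfolding Atil_def Etil_def transpose_vblk vblk_mult_hblk blk_mult_blk transpose_blk blk_add blk_diff
    by (simp add: G_def matrix_mul_uminus_left matrix_mul_uminus_right matrix_mul_assoc transpose_uminus
        matrix_transpose_mul Qs transpose_scalar matrix_mul_scaleR_left matrix_mul_scaleR_right
        power2_eq_square ED1 D1E' D1D1')
qed

section \<open>Integrals bounded by a Lyapunov function\<close>

lemma has_integral_le_if_Lyapunov:
  fixes h V V' :: "real \<Rightarrow> real"
  assumes cont: "continuous_on {0..T} h"
    and deriv: "\<And>t. (V has_real_derivative V' t) (at t)"
    and decrease: "\<And>t. V' t \<le> - h t" and V_nonneg: "\<And>t. V t \<ge> 0" and "0 \<le> T"
  shows "(h has_integral integral {0..T} h) {0..T}" and "integral {0..T} h \<le> V 0"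
proof -
  show hi: "(h has_integral integral {0..T} h) {0..T}"
    using cont by (intro integrable_integral integrable_continuous_interval)
  have "((\<lambda>t. - V' t) has_integral (- V T - (- V 0))) {0..T}"
  proof (rule fundamental_theorem_of_calculus[OF \<open>0 \<le> T\<close>])
    fix x assume "x \<in> {0..T}"
    have "((\<lambda>t. - V t) has_real_derivative - V' x) (at x within {0..T})"
      by (rule has_field_derivative_at_within) (intro DERIV_minus deriv)
    then show "((\<lambda>t. - V t) has_vector_derivative - V' x) (at x within {0..T})"
      by (simp add: has_real_derivative_iff_has_vector_derivative)
  qed
  then have "integral {0..T} h \<le> - V T - (- V 0)"
    using decrease by (intro has_integral_le[OF hi]) (auto simp: le_minus_iff)
  with V_nonneg[of T] show "integral {0..T} h \<le> V 0" by simp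
qed

lemma nn_integral_le_if_Lyapunov:
  fixes h V V' :: "real \<Rightarrow> real"
  assumes cont: "continuous_on UNIV h" and h_nonneg: "\<And>t. h t \<ge> 0"
    and deriv: "\<And>t. (V has_real_derivative V' t) (at t)"
    and decrease: "\<And>t. V' t \<le> - h t" and V_nonneg: "\<And>t. V t \<ge> 0"
  shows "(\<integral>\<^sup>+ t\<in>{0..}. ennreal (h t) \<partial>lborel) \<le> ennreal (V 0)"
proof -
  define u where "u n t = ennreal (h t) * indicator {0..real n} t" for n t
  have [measurable]: "h \<in> borel_measurable borel"
    by (rule borel_measurable_continuous_onI[OF cont])
  have "incseq u"
    unfolding u_def incseq_def le_fun_def by (auto intro!: mult_left_mono simp: indicator_def)
  have SUP_u: "(SUP n. u n t) = ennreal (h t) * indicator {0..} t" for t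
  proof (cases "t \<ge> 0")
    case True
    have "u (nat \<lceil>t\<rceil>) t \<le> (SUP n. u n t)" by (rule SUP_upper) auto
    moreover have "u (nat \<lceil>t\<rceil>) t = ennreal (h t)"
      using True by (simp add: u_def indicator_def)
    moreover have "(SUP n. u n t) \<le> ennreal (h t)"
      by (rule SUP_least) (auto simp: u_def indicator_def)
    ultimately show ?thesis using True by (simp add: indicator_def)
  qed (simp add: u_def indicator_def)
  have "(\<integral>\<^sup>+ t\<in>{0..}. ennreal (h t) \<partial>lborel) = (SUP n. integral\<^sup>N lborel (u n))"
    unfolding SUP_u[symmetric]
    by (rule nn_integral_monotone_convergence_SUP[OF \<open>incseq u\<close>])
      (unfold u_def, measurable)
  also have "\<dots> \<le> ennreal (V 0)"
  proof (rule SUP_least)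
    fix n
    have "integral\<^sup>N lborel (u n) = ennreal (integral {0..real n} h)"
      unfolding u_def
      by (rule nn_integral_has_integral_lebesgue'[OF h_nonneg has_integral_le_if_Lyapunov(1)])
        (auto intro: continuous_on_subset[OF cont] deriv decrease V_nonneg)
    also have "\<dots> \<le> ennreal (V 0)"
      by (intro ennreal_leI has_integral_le_if_Lyapunov(2)[OF _ deriv decrease V_nonneg])
        (auto intro: continuous_on_subset[OF cont])
    finally show "integral\<^sup>N lborel (u n) \<le> ennreal (V 0)" .
  qed
  finally show ?thesis .
qed

section \<open>The cost estimate\<close>

text \<open>Y and X stand for Ctil e^(t Atil) and G^T e^(t AF)^T; the coupling hypothesis then follows from
  Atil J = J AF and Ctil J = CF.\<close>
lemma closed_loop_Lyapunov_decrease: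
  fixes A :: "real^'n^'n" and B :: "real^'m^'n" and E :: "real^'q^'n"
    and C1 :: "real^'n^'r" and D1 :: "real^'q^'r" and C2 :: "real^'n^'p" and D2 :: "real^'m^'p"
    and F :: "real^'n^'m" and Q P :: "real^'n^'n" and Y :: "real^('n+'n)^'p" and X :: "real^'n^'r"
    and lam lam\<^sub>1 :: real
  defines "G \<equiv> - (Q ** transpose C1)"
    and "AF \<equiv> A + lam *\<^sub>R (B ** F)" and "CF \<equiv> lam^2 *\<^sub>R C2 + lam^2 *\<^sub>R (D2 ** F)"
  assumes D1E: "D1 ** transpose E = 0" and D1D1: "D1 ** transpose D1 = mat 1"
    and Qs: "transpose Q = Q"
    and L1: "negdef (transpose AF ** P + P ** AF + transpose CF ** CF)"
    and L2: "negdef (A ** Q + Q ** transpose A - Q ** transpose C1 ** C1 ** Q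
        + (1 / lam\<^sub>1^2) *\<^sub>R (E ** transpose E))"
    and coupling: "Y ** vblk (mat 1) (mat 1) ** G = CF ** transpose X"
  shows "trace (Y ** (Atil A B C1 F G lam ** blk Q 0 0 0 + blk Q 0 0 0 ** transpose (Atil A B C1 F G lam))
        ** transpose Y)
      + trace (X ** (transpose AF ** P + P ** AF) ** transpose X)
    \<le> - trace ((Y ** Etil E D1 G lam\<^sub>1) ** transpose (Y ** Etil E D1 G lam\<^sub>1))"
    (is "trace (Y ** (?AT ** ?S + ?S ** transpose ?AT) ** _) + _ \<le> - trace ((Y ** ?ET) ** _)")
proof -
  define R where
    "R = A ** Q + Q ** transpose A - Q ** transpose C1 ** C1 ** Q + (1 / lam\<^sub>1^2) *\<^sub>R (E ** transpose E)"
  define I1 where "I1 = vblk (mat 1) (0::real^'n^'n)"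
  define Z where "Z = CF ** transpose X"
  have J: "vblk (mat 1) (mat 1) ** G = vblk G G"
    by (simp add: vblk_mult)
  have "?AT ** ?S + ?S ** transpose ?AT
      = (vblk (mat 1) (mat 1) ** G) ** transpose (vblk (mat 1) (mat 1) ** G) + I1 ** R ** transpose I1
        - ?ET ** transpose ?ET"
    unfolding I1_def blk_corner_eq_congruence[symmetric] J unfolding G_def R_def
    by (rule Atil_Lyapunov_identity[OF D1E D1D1 Qs])
  then have "trace (Y ** (?AT ** ?S + ?S ** transpose ?AT) ** transpose Y)
      = trace ((Y ** vblk (mat 1) (mat 1) ** G) ** transpose (Y ** vblk (mat 1) (mat 1) ** G))
        + trace ((Y ** I1) ** R ** transpose (Y ** I1)) - trace ((Y ** ?ET) ** transpose (Y ** ?ET))"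
    by (simp add: matrix_add_ldistrib matrix_add_rdistrib matrix_diff_ldistrib matrix_diff_rdistrib
        trace_add trace_sub matrix_transpose_mul matrix_mul_assoc)
  then have "trace (Y ** (?AT ** ?S + ?S ** transpose ?AT) ** transpose Y)
      = trace (Z ** transpose Z) + trace ((Y ** I1) ** R ** transpose (Y ** I1))
        - trace ((Y ** ?ET) ** transpose (Y ** ?ET))"
    unfolding coupling Z_def .
  moreover have "trace (X ** (transpose AF ** P + P ** AF) ** transpose X)
      = trace (X ** (transpose AF ** P + P ** AF + transpose CF ** CF) ** transpose X)
        - trace (transpose Z ** Z)"
    unfolding Z_def
    by (simp add: matrix_add_ldistrib matrix_add_rdistrib trace_add matrix_transpose_mul matrix_mul_assoc)
  moreover have "trace (transpose Z ** Z) = trace (Z ** transpose Z)"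
    by (rule trace_mul_sym)
  moreover have "trace ((Y ** I1) ** R ** transpose (Y ** I1)) \<le> 0"
    using L2 unfolding R_def by (intro trace_congruence_nonpos negdef_quadform_nonpos)
  moreover have "trace (X ** (transpose AF ** P + P ** AF + transpose CF ** CF) ** transpose X) \<le> 0"
    using L1 by (intro trace_congruence_nonpos negdef_quadform_nonpos)
  ultimately show ?thesis by linarith
qed

lemma Jcost_le:
  fixes A :: "real^'n^'n" and B :: "real^'m^'n" and E :: "real^'q^'n"
    and C1 :: "real^'n^'r" and D1 :: "real^'q^'r" and C2 :: "real^'n^'p" and D2 :: "real^'m^'p"
    and F :: "real^'n^'m" and Q P :: "real^'n^'n"
  assumes D1E: "D1 ** transpose E = 0" and D1D1: "D1 ** transpose D1 = mat 1"
    and Q: "posdef Q" and P: "posdef P"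
    and L1: "negdef (transpose (A + lam *\<^sub>R (B ** F)) ** P + P ** (A + lam *\<^sub>R (B ** F))
        + transpose (lam^2 *\<^sub>R C2 + lam^2 *\<^sub>R (D2 ** F)) ** (lam^2 *\<^sub>R C2 + lam^2 *\<^sub>R (D2 ** F)))"
    and L2: "negdef (A ** Q + Q ** transpose A - Q ** transpose C1 ** C1 ** Q
        + (1 / lam\<^sub>1^2) *\<^sub>R (E ** transpose E))"
  shows "Jcost A B E C1 D1 C2 D2 F (- (Q ** transpose C1)) lam\<^sub>1 lam
    \<le> ennreal (trace (C1 ** Q ** P ** Q ** transpose C1) + lam^4 * trace (C2 ** Q ** transpose C2))"
proof -
  have Qs: "transpose Q = Q" using Q by (simp add: posdef_def)
  define G where "G = - (Q ** transpose C1)"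
  define AF where "AF = A + lam *\<^sub>R (B ** F)"
  define AT where "AT = Atil A B C1 F G lam"
  define CT where "CT = Ctil C2 D2 F lam"
  define ET where "ET = Etil E D1 G lam\<^sub>1"
  define S where "S = (blk Q 0 0 0 :: real^('n+'n)^('n+'n))"
  define Y where "Y t = CT ** mexp (t *\<^sub>R AT)" for t
  define X where "X t = transpose G ** transpose (mexp (t *\<^sub>R AF))" for t
  define V where "V t = trace (Y t ** S ** transpose (Y t)) + trace (X t ** P ** transpose (X t))" for t
  define V' where "V' t = trace (Y t ** (AT ** S + S ** transpose AT) ** transpose (Y t))
    + trace (X t ** (transpose AF ** P + P ** AF) ** transpose (X t))" for t
  define h where "h t = trace (transpose (Y t ** ET) ** (Y t ** ET))" for t
  have dY: "(Y has_vector_derivative Y t ** AT) (at t)" for t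
    using bounded_bilinear.has_vector_derivative[OF bounded_bilinear_matrix_mul
        has_vector_derivative_const[of CT] has_vector_derivative_mexp_right]
    unfolding Y_def by (simp add: matrix_mul_assoc)
  have dX: "(X has_vector_derivative X t ** transpose AF) (at t)" for t
    using bounded_bilinear.has_vector_derivative[OF bounded_bilinear_matrix_mul
        has_vector_derivative_const[of "transpose G"]
        bounded_linear.has_vector_derivative[OF bounded_linear_transpose has_vector_derivative_mexp_left]]
    unfolding X_def by (simp add: matrix_transpose_mul matrix_mul_assoc)
  have deriv: "(V has_real_derivative V' t) (at t)" for t
    using DERIV_add[OF has_real_derivative_trace_congruence[OF dY, of S]
        has_real_derivative_trace_congruence[OF dX, of P]]
    unfolding V_def V'_def by simp
  have "Y t ** vblk (mat 1) (mat 1) ** G = (lam^2 *\<^sub>R C2 + lam^2 *\<^sub>R (D2 ** F)) ** transpose (X t)" for t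
    unfolding Y_def X_def CT_def AT_def AF_def
    by (simp add: Ctil_mexp_Atil_mult_vblk_id matrix_transpose_mul matrix_mul_assoc)
  then have decrease: "V' t \<le> - h t" for t
    using closed_loop_Lyapunov_decrease[OF D1E D1D1 Qs L1 L2]
    unfolding V'_def h_def AT_def ET_def S_def AF_def G_def
    by (simp add: trace_mul_sym[of "transpose _"])
  have V_nonneg: "V t \<ge> 0" for t
    using trace_congruence_nonneg[OF posdef_quadform_nonneg[OF Q], of "Y t ** vblk (mat 1) 0"]
      trace_congruence_nonneg[OF posdef_quadform_nonneg[OF P], of "X t"]
    unfolding V_def S_def blk_corner_eq_congruence by (simp add: matrix_transpose_mul matrix_mul_assoc)
  have h_nonneg: "h t \<ge> 0" for t
    using trace_congruence_nonneg[of "mat 1" "Y t ** ET"] unfolding h_def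
    by (simp add: trace_mul_sym[of "transpose _"])
  have "continuous_on UNIV h"
    unfolding h_def Y_def
    by (intro bounded_linear.continuous_on[OF bounded_linear_trace]
        bounded_bilinear.continuous_on[OF bounded_bilinear_matrix_mul]
        bounded_linear.continuous_on[OF bounded_linear_transpose] continuous_on_const continuous_on_mexp)
  then have "Jcost A B E C1 D1 C2 D2 F G lam\<^sub>1 lam \<le> ennreal (V 0)"
    unfolding Jcost_def using nn_integral_le_if_Lyapunov[OF _ h_nonneg deriv decrease V_nonneg]
    by (simp add: h_def Y_def AT_def CT_def ET_def)
  also have "V 0 = trace (C1 ** Q ** P ** Q ** transpose C1) + lam^4 * trace (C2 ** Q ** transpose C2)"
    unfolding V_def Y_def X_def S_def CT_def G_def
    by (simp add: mexp_zero Ctil_congruence_blk trace_scaleR transpose_uminus matrix_transpose_mul Qs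
        matrix_mul_uminus_left matrix_mul_uminus_right matrix_mul_assoc)
  finally show ?thesis unfolding G_def .
qed

theorem lemma9:
  fixes A :: "real^'n^'n" and B :: "real^'m^'n" and E :: "real^'q^'n"
    and C1 :: "real^'n^'r" and D1 :: "real^'q^'r"
    and C2 :: "real^'n^'p" and D2 :: "real^'m^'p"
    and F :: "real^'n^'m" and Q :: "real^'n^'n" and P :: "nat \<Rightarrow> real^'n^'n"
    and M :: nat and lam :: "nat \<Rightarrow> real" and \<gamma> :: real
  assumes stab: "stabilizable A B" and det: "detectable C1 A"
    and M: "M \<ge> 1"
    and lam_pos: "0 < lam 1"
    and lam_mono: "\<And>i j. 1 \<le> i \<Longrightarrow> i \<le> j \<Longrightarrow> j \<le> M \<Longrightarrow> lam i \<le> lam j"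
    and gamma: "\<gamma> > 0"
    and D1E: "D1 ** transpose E = 0" and D2C2: "transpose D2 ** C2 = 0"
    and D1D1: "D1 ** transpose D1 = mat 1" and D2D2: "transpose D2 ** D2 = mat 1"
    and Ppos: "\<And>i. i \<in> {1..M} \<Longrightarrow> posdef (P i)"
    and Qpos: "posdef Q"
    and LMI1: "\<And>i. i \<in> {1..M} \<Longrightarrow> negdef
        (transpose (A + lam i *\<^sub>R (B ** F)) ** P i + P i ** (A + lam i *\<^sub>R (B ** F))
         + transpose ((lam i)^2 *\<^sub>R C2 + (lam i)^2 *\<^sub>R (D2 ** F))
           ** ((lam i)^2 *\<^sub>R C2 + (lam i)^2 *\<^sub>R (D2 ** F)))"
    and LMI2: "negdef (A ** Q + Q ** transpose A - Q ** transpose C1 ** C1 ** Q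
                        + (1 / (lam 1)^2) *\<^sub>R (E ** transpose E))"
    and trbound: "(\<Sum>i=1..M. trace (C1 ** Q ** P i ** Q ** transpose C1)
                              + (lam i)^4 * trace (C2 ** Q ** transpose C2)) < \<gamma>"
  shows "(\<forall>i\<in>{1..M}. hurwitz (Atil A B C1 F (- (Q ** transpose C1)) (lam i)))
    \<and> (\<Sum>i=1..M. Jcost A B E C1 D1 C2 D2 F (- (Q ** transpose C1)) (lam 1) (lam i)) < ennreal \<gamma>"
proof
  have "hurwitz (A + (- (Q ** transpose C1)) ** C1)"
    by (rule hurwitz_if_Riccati_inequality[OF Qpos _ LMI2]) simp
  then show "\<forall>i\<in>{1..M}. hurwitz (Atil A B C1 F (- (Q ** transpose C1)) (lam i))"
    using hurwitz_Atil hurwitz_if_Lyapunov_inequality[OF Ppos LMI1] by blast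
  define bound where
    "bound i = trace (C1 ** Q ** P i ** Q ** transpose C1) + (lam i)^4 * trace (C2 ** Q ** transpose C2)" for i
  have bound_nonneg: "bound i \<ge> 0" if "i \<in> {1..M}" for i
  proof -
    have "transpose Q = Q" using Qpos by (simp add: posdef_def)
    then show ?thesis
      using trace_congruence_nonneg[OF posdef_quadform_nonneg[OF Ppos[OF that]], of "C1 ** Q"]
        trace_congruence_nonneg[OF posdef_quadform_nonneg[OF Qpos], of C2]
      unfolding bound_def by (simp add: matrix_transpose_mul matrix_mul_assoc)
  qed
  have "(\<Sum>i=1..M. Jcost A B E C1 D1 C2 D2 F (- (Q ** transpose C1)) (lam 1) (lam i))
      \<le> (\<Sum>i=1..M. ennreal (bound i))"
    unfolding bound_def by (intro sum_mono Jcost_le[OF D1E D1D1 Qpos Ppos LMI1 LMI2])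
  also have "\<dots> = ennreal (\<Sum>i=1..M. bound i)"
    using bound_nonneg by (rule sum_ennreal)
  also have "\<dots> < ennreal \<gamma>"
    using trbound gamma unfolding bound_def by (intro ennreal_lessI)
  finally show "(\<Sum>i=1..M. Jcost A B E C1 D1 C2 D2 F (- (Q ** transpose C1)) (lam 1) (lam i))
      < ennreal \<gamma>" .
qed

end
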